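(* Let $\alpha\in\mathbb{C}$, $\beta\in\mathbb{C}\setminus\mathbb{Z}$, and $D\in\mathrm{Der}(\mathcal{W},\mathcal{F}_\alpha\otimes\mathcal{F}_\beta)_0$. Write $D(L_1)=\sum_{i\in\mathbb{Z}}a_{1,i}v_i\otimes v_{1-i}$ and $l=\max\{|i|: a_{1,i}\neq0\}$ (assuming $D(L_1)\ne 0$). Then there exist $c_{-l},\dots,c_l\in\mathbb{C}$ such that $$D(L_1)=L_1\cdot\Big(\sum_{i=-l}^{l}c_i\,v_i\otimes v_{-i}\Big)+c_l(\alpha+l)\,v_{l+1}\otimes v_{-l}.$$
   Context: The Witt algebra $\mathcal{W}$ has basis $\{L_n\mid n\in\mathbb{Z}\}$ and bracket $[L_m,L_n]=(m-n)L_{m+n}$. $\mathcal{F}_\alpha$ has basis $\{v_n\}$ with $L_m\cdot v_n=-(\alpha m+n)v_{m+n}$; $\mathcal{F}_\alpha\otimes\mathcal{F}_\beta$ is a $\mathcal{W}$-module via $L_m\cdot(v_i\otimes v_j)=-(i+\alpha m)v_{m+i}\otimes v_j-(j+\beta m)v_i\otimes v_{m+j}$, graded by $(\mathcal{F}_\alpha\otimes\mathcal{F}_\beta)_k=\bigoplus_i\mathbb{C}\,v_i\otimes v_{k-i}$. $\mathrm{Der}(\mathcal{W},\mathcal{F}_\alpha\otimes\mathcal{F}_\beta)_0$ is the space of linear maps $D$ with $D([x,y])=x\cdot D(y)-y\cdot D(x)$ and $D(L_m)\in(\mathcal{F}_\alpha\otimes\mathcal{F}_\beta)_m$ for all $m$.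 *)

theory Defs
  imports Complex_Main
begin

text \<open>Elements of the Witt algebra W are finitely supported functions x :: int => complex,
  x = sum_n (x n) L_n.  Elements of F_alpha (x) F_beta are finitely supported
  functions w :: int * int => complex, w = sum_{i,j} w(i,j) v_i (x) v_j.\<close>

definition fin_supp :: "('a \<Rightarrow> complex) \<Rightarrow> bool" where
  "fin_supp f \<longleftrightarrow> finite {x. f x \<noteq> 0}"

definition Lb :: "int \<Rightarrow> int \<Rightarrow> complex" where
  "Lb m = (\<lambda>n. if n = m then 1 else 0)"

definition tens_vec :: "int \<Rightarrow> int \<Rightarrow> int \<times> int \<Rightarrow> complex" where
  "tens_vec a b = (\<lambda>(i, j). if i = a \<and> j = b then 1 else 0)"

text \<open>Witt bracket: [L_m, L_n] = (m - n) L_{m+n}, extended bilinearly.\<close>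
definition witt_bracket :: "(int \<Rightarrow> complex) \<Rightarrow> (int \<Rightarrow> complex) \<Rightarrow> int \<Rightarrow> complex" where
  "witt_bracket x y = (\<lambda>k. \<Sum>m\<in>{m. x m \<noteq> 0}. of_int (m - (k - m)) * x m * y (k - m))"

text \<open>Action of L_m on F_alpha (x) F_beta:
  L_m (v_a (x) v_b) = -(a + alpha m) v_{m+a} (x) v_b - (b + beta m) v_a (x) v_{m+b}.\<close>
definition Lact :: "complex \<Rightarrow> complex \<Rightarrow> int \<Rightarrow> (int \<times> int \<Rightarrow> complex) \<Rightarrow> int \<times> int \<Rightarrow> complex" where
  "Lact \<alpha> \<beta> m w = (\<lambda>(i, j). - (of_int (i - m) + \<alpha> * of_int m) * w (i - m, j)
                               - (of_int (j - m) + \<beta> * of_int m) * w (i, j - m))"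

definition wact :: "complex \<Rightarrow> complex \<Rightarrow> (int \<Rightarrow> complex) \<Rightarrow> (int \<times> int \<Rightarrow> complex) \<Rightarrow> int \<times> int \<Rightarrow> complex" where
  "wact \<alpha> \<beta> x w = (\<lambda>p. \<Sum>m\<in>{m. x m \<noteq> 0}. x m * Lact \<alpha> \<beta> m w p)"

text \<open>D is in Der(W, F_alpha (x) F_beta)_0: a linear map W -> F_alpha (x) F_beta
  (only its values on finitely supported arguments matter), satisfying the derivation
  rule, and with D(L_m) in degree m.\<close>
definition is_der0 :: "complex \<Rightarrow> complex \<Rightarrow> ((int \<Rightarrow> complex) \<Rightarrow> (int \<times> int \<Rightarrow> complex)) \<Rightarrow> bool" where
  "is_der0 \<alpha> \<beta> D \<longleftrightarrow>
     (\<forall>x. fin_supp x \<longrightarrow> fin_supp (D x)) \<and>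
     (\<forall>x y a b. fin_supp x \<longrightarrow> fin_supp y \<longrightarrow>
         D (\<lambda>n. a * x n + b * y n) = (\<lambda>p. a * D x p + b * D y p)) \<and>
     (\<forall>x y. fin_supp x \<longrightarrow> fin_supp y \<longrightarrow>
         D (witt_bracket x y) = (\<lambda>p. wact \<alpha> \<beta> x (D y) p - wact \<alpha> \<beta> y (D x) p)) \<and>
     (\<forall>m i j. D (Lb m) (i, j) \<noteq> 0 \<longrightarrow> i + j = m)"

end

theory Submission
  imports Defs
begin

text \<open>Only the grading of D(L_1) and its finite support enter: on the degree-1 component the
  operator w \<mapsto> L_1 w is lower triangular in the index i, with diagonal entries \<beta> - i, which are
  nonzero because \<beta> \<notin> \<int>. Solving upwards from i = -l determines c_{-l}, ..., c_l; the coefficient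
  of v_{l+1} \<otimes> v_{-l}, which L_1 produces from c_l and D(L_1) does not have, is cancelled by the
  extra term c_l(\<alpha> + l) v_{l+1} \<otimes> v_{-l}.\<close>

lemma diff_of_int_nonzero: "\<beta> \<notin> \<int> \<Longrightarrow> \<beta> - of_int k \<noteq> (0::complex)"
  by (metis Ints_of_int eq_iff_diff_eq_0)

text \<open>The n-th unknown c_{s+n} of the triangular system, by forward substitution.\<close>
fun forward_subst :: "(int \<Rightarrow> complex) \<Rightarrow> complex \<Rightarrow> complex \<Rightarrow> int \<Rightarrow> nat \<Rightarrow> complex" where
  "forward_subst a \<alpha> \<beta> s 0 = - a s / (\<beta> - of_int s)"
| "forward_subst a \<alpha> \<beta> s (Suc n) =
     (- a (s + int n + 1) - (of_int (s + int n) + \<alpha>) * forward_subst a \<alpha> \<beta> s n)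
       / (\<beta> - of_int (s + int n + 1))"

lemma triangular_recurrence_solvable:
  fixes a :: "int \<Rightarrow> complex"
  assumes "\<beta> \<notin> \<int>"
  obtains c where "\<And>k. k < s \<Longrightarrow> c k = 0"
    and "\<And>k. s \<le> k \<Longrightarrow> a k = - (of_int (k - 1) + \<alpha>) * c (k - 1) - (\<beta> - of_int k) * c k"
proof
  define c where "c k = (if k < s then 0 else forward_subst a \<alpha> \<beta> s (nat (k - s)))" for k
  show "c k = 0" if "k < s" for k
    using that by (simp add: c_def)
  show "a k = - (of_int (k - 1) + \<alpha>) * c (k - 1) - (\<beta> - of_int k) * c k" if "s \<le> k" for k
  proof (cases "k = s")
    case True
    then show ?thesis using diff_of_int_nonzero[OF assms, of s] by (simp add: c_def)
  next
    case False
    define n where "n = nat (k - 1 - s)"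
    have k: "k = s + int n + 1" and "nat (k - s) = Suc n"
      using False that by (auto simp: n_def)
    then have "c k = (- a k - (of_int (k - 1) + \<alpha>) * c (k - 1)) / (\<beta> - of_int k)"
      using False that by (simp add: c_def n_def)
    then show ?thesis using diff_of_int_nonzero[OF assms, of k] by (simp add: field_simps)
  qed
qed

lemma Lact_one_degree_one:
  "Lact \<alpha> \<beta> 1 w (i, 1 - i) = - (of_int (i - 1) + \<alpha>) * w (i - 1, 1 - i) - (\<beta> - of_int i) * w (i, - i)"
  by (simp add: Lact_def algebra_simps)

lemma Lact_one_outside_degree:
  assumes "\<And>i j. w (i, j) \<noteq> 0 \<Longrightarrow> i + j = 0" and "i + j \<noteq> 1"
  shows "Lact \<alpha> \<beta> 1 w (i, j) = 0"
proof -
  have "i - 1 + j \<noteq> 0" and "i + (j - 1) \<noteq> 0" using assms(2) by simp_all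
  then have "w (i - 1, j) = 0" and "w (i, j - 1) = 0" using assms(1) by blast+
  then show ?thesis by (simp add: Lact_def)
qed

lemma degree_one_decomposition:
  fixes w :: "int \<times> int \<Rightarrow> complex" and l :: int
  assumes "\<beta> \<notin> \<int>" and "0 \<le> l"
    and deg: "\<And>i j. w (i, j) \<noteq> 0 \<Longrightarrow> i + j = 1"
    and bound: "\<And>i j. w (i, j) \<noteq> 0 \<Longrightarrow> \<bar>i\<bar> \<le> l"
  shows "\<exists>c :: int \<Rightarrow> complex.
           w = (\<lambda>p. Lact \<alpha> \<beta> 1 (\<lambda>(i, j). if - l \<le> i \<and> i \<le> l \<and> j = - i then c i else 0) p
                   + c l * (\<alpha> + of_int l) * tens_vec (l + 1) (- l) p)"
proof -
  obtain c where below: "\<And>k. k < - l \<Longrightarrow> c k = 0"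
    and rec: "\<And>k. - l \<le> k \<Longrightarrow> w (k, 1 - k) = - (of_int (k - 1) + \<alpha>) * c (k - 1) - (\<beta> - of_int k) * c k"
    using triangular_recurrence_solvable[OF assms(1), where a = "\<lambda>k. w (k, 1 - k)" and s = "- l" and \<alpha> = \<alpha>] by blast
  define u where "u = (\<lambda>(i, j). if - l \<le> i \<and> i \<le> l \<and> j = - i then c i else 0)"
  have "w (i, j) = Lact \<alpha> \<beta> 1 u (i, j) + c l * (\<alpha> + of_int l) * tens_vec (l + 1) (- l) (i, j)" for i j
  proof (cases "i + j = 1")
    case False
    have "Lact \<alpha> \<beta> 1 u (i, j) = 0"
      by (rule Lact_one_outside_degree) (use False in \<open>auto simp: u_def split: if_splits\<close>)
    then show ?thesis using False deg[of i j] by (auto simp: tens_vec_def)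
  next
    case True
    then have j: "j = 1 - i" by simp
    have L: "Lact \<alpha> \<beta> 1 u (i, 1 - i)
        = - (of_int (i - 1) + \<alpha>) * (if - l \<le> i - 1 \<and> i - 1 \<le> l then c (i - 1) else 0)
          - (\<beta> - of_int i) * (if - l \<le> i \<and> i \<le> l then c i else 0)"
      unfolding Lact_one_degree_one by (simp add: u_def)
    consider "- l \<le> i \<and> i \<le> l" | "i = l + 1" | "i < - l \<or> l + 1 < i" by linarith
    then show ?thesis
    proof cases
      case 1
      moreover have "(if - l \<le> i - 1 \<and> i - 1 \<le> l then c (i - 1) else 0) = c (i - 1)"
        using 1 below[of "i - 1"] by auto
      ultimately show ?thesis using rec[of i] \<open>0 \<le> l\<close> by (simp add: L j tens_vec_def)
    next
      case 2
      then have "w (i, j) = 0" using bound[of i j] \<open>0 \<le> l\<close> by force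
      moreover have "Lact \<alpha> \<beta> 1 u (i, 1 - i) = - (of_int l + \<alpha>) * c l"
        unfolding L using 2 \<open>0 \<le> l\<close> by simp
      ultimately show ?thesis using 2 by (simp add: j tens_vec_def algebra_simps)
    next
      case 3
      then have "w (i, j) = 0" using bound[of i j] by force
      then show ?thesis using 3 \<open>0 \<le> l\<close> by (auto simp: L j tens_vec_def)
    qed
  qed
  then show ?thesis unfolding u_def by (intro exI[of _ c]) auto
qed

lemma is_der0_fin_supp: "is_der0 \<alpha> \<beta> D \<Longrightarrow> fin_supp x \<Longrightarrow> fin_supp (D x)"
  unfolding is_der0_def by blast

lemma is_der0_degree: "is_der0 \<alpha> \<beta> D \<Longrightarrow> D (Lb m) (i, j) \<noteq> 0 \<Longrightarrow> i + j = m"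
  unfolding is_der0_def by blast

theorem lemmaL1p4:
  fixes \<alpha> \<beta> :: complex
    and D :: "(int \<Rightarrow> complex) \<Rightarrow> (int \<times> int \<Rightarrow> complex)"
    and l :: int
  assumes "\<beta> \<notin> \<int>"
    and "is_der0 \<alpha> \<beta> D"
    and "D (Lb 1) \<noteq> (\<lambda>_. 0)"
    and "l = Max {\<bar>i\<bar> | i. D (Lb 1) (i, 1 - i) \<noteq> 0}"
  shows "\<exists>c :: int \<Rightarrow> complex.
           D (Lb 1) = (\<lambda>p. Lact \<alpha> \<beta> 1 (\<lambda>(i, j). if - l \<le> i \<and> i \<le> l \<and> j = - i then c i else 0) p
                          + c l * (\<alpha> + of_int l) * tens_vec (l + 1) (- l) p)"
proof (rule degree_one_decomposition[OF assms(1)])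
  let ?w = "D (Lb 1)"
  show deg: "i + j = 1" if "?w (i, j) \<noteq> 0" for i j
    using is_der0_degree[OF assms(2) that] .
  have "finite {p. ?w p \<noteq> 0}"
    using is_der0_fin_supp[OF assms(2)] by (simp add: fin_supp_def Lb_def)
  then have "finite ((\<lambda>p. \<bar>fst p\<bar>) ` {p. ?w p \<noteq> 0})" by (rule finite_imageI)
  moreover have "{\<bar>i\<bar> | i. ?w (i, 1 - i) \<noteq> 0} \<subseteq> (\<lambda>p. \<bar>fst p\<bar>) ` {p. ?w p \<noteq> 0}" by force
  ultimately have fin: "finite {\<bar>i\<bar> | i. ?w (i, 1 - i) \<noteq> 0}" by (rule finite_subset[rotated])
  show bound: "\<bar>i\<bar> \<le> l" if "?w (i, j) \<noteq> 0" for i j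
  proof -
    have "j = 1 - i" using deg[OF that] by simp
    then show ?thesis using that assms(4) Max_ge[OF fin] by blast
  qed
  obtain i j where "?w (i, j) \<noteq> 0" using assms(3) by fastforce
  then show "0 \<le> l" using bound by fastforce
qed

end
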